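(* Let $n\ge2$. Among sets $K\in\mathcal S_n\setminus\{\emptyset,\mathbb R^n\}$, the unit balls $B(x,1)$, $x\in\mathbb R^n$, are the only ones with no $c$-extremal points.
   Context: $B(x,r)$ is the closed Euclidean ball. For $A\subseteq\mathbb R^n$, $A^c=\bigcap_{x\in A}B(x,1)$ (with $\emptyset^c=\mathbb R^n$), and $\mathrm{conv}_c(A)=A^{cc}$ is its $c$-hull. $\mathcal S_n$ is the class of all sets of the form $\bigcap_{x\in A}B(x,1)$, $A\subseteq\mathbb R^n$. For $K\in\mathcal S_n$, a point $x\in K$ is $c$-extremal for $K$ if whenever $x\in\mathrm{conv}_c(\{y,z\})$ with $y,z\in K$, then $y=x$ or $z=x$. *)

theory Defs
  imports "HOL-Analysis.Analysis"
begin

text \<open>A^c = intersection of closed unit balls centred at points of A (empty intersection = UNIV).\<close>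
definition cdual :: "'a::real_normed_vector set \<Rightarrow> 'a set" where
  "cdual A = (\<Inter>x\<in>A. cball x 1)"

definition chull :: "'a::real_normed_vector set \<Rightarrow> 'a set" where
  "chull A = cdual (cdual A)"

definition cspindle_class :: "'a::real_normed_vector set set" where
  "cspindle_class = {K. \<exists>A. K = cdual A}"

definition c_extremal :: "'a::real_normed_vector set \<Rightarrow> 'a \<Rightarrow> bool" where
  "c_extremal K x \<longleftrightarrow> x \<in> K \<and>
     (\<forall>y\<in>K. \<forall>z\<in>K. x \<in> chull {y, z} \<longrightarrow> y = x \<or> z = x)"

end

(*
  A unit ball B(x,1) has no c-extremal point: through any of its points p runs a chord
  [x - v, x + v] with |v| = 1 orthogonal to p - x, and the c-hull of {x + v, x - v} is
  all of B(x,1), since {x + v, x - v}^c = {x}.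

  Conversely, if K is not a unit ball then K^c has two points a \<noteq> b, so K lies in the
  lens B(a,1) \<inter> B(b,1). A point p of K farthest from the midpoint q of a, b has
  |p - q| = R < 1, and the unit ball whose centre lies on the ray from p through q is
  internally tangent at p to B(q,R) \<supseteq> K. Every other point of K is strictly inside it;
  pushing the centre slightly away from p yields a unit ball containing any two points
  y, z \<noteq> p of K but not p, so p \<notin> conv_c {y, z}: p is c-extremal.
*)
theory Submission
  imports Defs
begin

lemma mem_cdual: "x \<in> cdual A \<longleftrightarrow> (\<forall>a\<in>A. dist a x \<le> 1)"
  by (auto simp: cdual_def)

lemma cdual_empty [simp]: "cdual {} = UNIV"
  by (simp add: cdual_def)

lemma cdual_singleton [simp]: "cdual {a} = cball a 1"
  by (simp add: cdual_def)

lemma cdual_antimono: "A \<subseteq> B \<Longrightarrow> cdual B \<subseteq> cdual A"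
  by (auto simp: cdual_def)

lemma subset_cdual_cdual: "A \<subseteq> cdual (cdual A)"
  by (clarsimp simp: mem_cdual) (metis dist_commute)

lemma closed_cdual: "closed (cdual A)"
  unfolding cdual_def by (auto intro: closed_INT)

lemma cdual_cdual_cspindle:
  assumes "K \<in> cspindle_class"
  shows "cdual (cdual K) = K"
proof -
  obtain A where K: "K = cdual A"
    using assms by (auto simp: cspindle_class_def)
  have "cdual (cdual (cdual A)) \<subseteq> cdual A"
    by (rule cdual_antimono[OF subset_cdual_cdual])
  then show ?thesis
    using subset_cdual_cdual[of K] K by auto
qed

lemma cdual_cspindle_nonempty:
  assumes "K \<in> cspindle_class" "K \<noteq> UNIV"
  shows "cdual K \<noteq> {}"
  using cdual_cdual_cspindle[OF assms(1)] assms(2) by force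

lemma cdual_antipodal_pair:
  fixes x v :: "'a::real_inner"
  assumes "norm v = 1"
  shows "cdual {x + v, x - v} = {x}"
proof (intro equalityI subsetI)
  fix w assume "w \<in> cdual {x + v, x - v}"
  then have "norm (w - x - v) \<le> 1" "norm (w - x + v) \<le> 1"
    by (auto simp: mem_cdual dist_norm norm_minus_commute algebra_simps)
  then have "norm (w - x - v)^2 \<le> 1" "norm (w - x + v)^2 \<le> 1"
    by (simp_all add: power_le_one)
  moreover have "norm (w - x - v)^2 + norm (w - x + v)^2 = 2 * norm (w - x)^2 + 2"
    using assms by (simp add: norm_eq_1 power2_norm_eq_inner inner_diff inner_add algebra_simps inner_commute)
  ultimately have "norm (w - x)^2 \<le> 0"
    by linarith
  then show "w \<in> {x}"
    by simp
qed (use assms in \<open>auto simp: mem_cdual dist_norm\<close>)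

lemma chull_antipodal_pair:
  fixes x v :: "'a::real_inner"
  assumes "norm v = 1"
  shows "chull {x + v, x - v} = cball x 1"
  by (simp add: chull_def cdual_antipodal_pair[OF assms])

lemma not_c_extremal_cball:
  fixes x :: "'a::euclidean_space"
  assumes "2 \<le> DIM('a)"
  shows "\<not> c_extremal (cball x 1) p"
proof
  assume ext: "c_extremal (cball x 1) p"
  obtain v0 where "v0 \<noteq> 0" "orthogonal (p - x) v0"
    using orthogonal_to_vector_exists[OF assms] by blast
  define v where "v = sgn v0"
  have v: "norm v = 1" "inner (p - x) v = 0"
    using \<open>v0 \<noteq> 0\<close> \<open>orthogonal (p - x) v0\<close> by (simp_all add: v_def norm_sgn sgn_div_norm orthogonal_def)
  have "x + v \<noteq> p" "x - v \<noteq> p"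
    using v by (auto simp: algebra_simps)
  moreover have "x + v \<in> cball x 1" "x - v \<in> cball x 1" "p \<in> chull {x + v, x - v}"
    using v ext by (auto simp: dist_norm chull_antipodal_pair c_extremal_def)
  ultimately show False
    using ext unfolding c_extremal_def by blast
qed

lemma dist_midpoint_lt_one:
  fixes a b p :: "'a::real_inner"
  assumes "dist a p \<le> 1" "dist b p \<le> 1" "a \<noteq> b"
  shows "dist (midpoint a b) p < 1"
proof -
  have "norm (p - a)^2 \<le> 1" "norm (p - b)^2 \<le> 1"
    using assms by (simp_all add: dist_norm norm_minus_commute power_le_one)
  moreover have "norm ((p - a) + (p - b))^2 + norm ((p - a) - (p - b))^2
      = 2 * norm (p - a)^2 + 2 * norm (p - b)^2"
    by (simp add: power2_norm_eq_inner inner_diff inner_add algebra_simps inner_commute)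
  moreover have "(p - a) + (p - b) = 2 *\<^sub>R (p - midpoint a b)"
    by (simp add: midpoint_def algebra_simps scaleR_2)
  then have "norm ((p - a) + (p - b))^2 = 4 * norm (p - midpoint a b)^2"
    by (simp add: power_mult_distrib)
  moreover have "norm ((p - a) - (p - b))^2 > 0"
    using assms(3) by simp
  ultimately have "norm (p - midpoint a b)^2 < 1"
    by linarith
  then show ?thesis
    by (simp add: dist_norm norm_minus_commute power_less_one_iff)
qed

lemma dist_lt_one_in_tangent_ball:
  fixes q u w :: "'a::real_inner"
  assumes u: "norm u = 1" and "R < 1" "dist q w \<le> R" "w \<noteq> q + R *\<^sub>R u"
  shows "dist (q + R *\<^sub>R u - u) w < 1"
proof -
  have R: "norm (w - q) \<le> R" "norm ((1 - R) *\<^sub>R u) = 1 - R"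
    using assms by (simp_all add: dist_norm norm_minus_commute)
  have dist_eq: "dist (q + R *\<^sub>R u - u) w = norm ((w - q) + (1 - R) *\<^sub>R u)"
    by (simp add: dist_norm norm_minus_commute algebra_simps)
  have "norm ((w - q) + (1 - R) *\<^sub>R u) \<le> norm (w - q) + (1 - R)"
    using norm_triangle_ineq[of "w - q" "(1 - R) *\<^sub>R u"] R by simp
  moreover have "norm ((w - q) + (1 - R) *\<^sub>R u) \<noteq> 1"
  proof
    assume "norm ((w - q) + (1 - R) *\<^sub>R u) = 1"
    then have "norm (w - q) = R"
      and "norm ((w - q) + (1 - R) *\<^sub>R u) = norm (w - q) + norm ((1 - R) *\<^sub>R u)"
      using R \<open>norm ((w - q) + (1 - R) *\<^sub>R u) \<le> norm (w - q) + (1 - R)\<close> by linarith+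
    with norm_triangle_eq
    have "norm (w - q) *\<^sub>R ((1 - R) *\<^sub>R u) = norm ((1 - R) *\<^sub>R u) *\<^sub>R (w - q)"
      by blast
    then have "(1 - R) *\<^sub>R (R *\<^sub>R u) = (1 - R) *\<^sub>R (w - q)"
      using R(2) \<open>norm (w - q) = R\<close> by (simp add: mult.commute)
    then have "R *\<^sub>R u = w - q"
      using \<open>R < 1\<close> by (metis scaleR_cancel_left right_minus_eq less_irrefl)
    then have "w = q + R *\<^sub>R u"
      by (simp add: algebra_simps)
    with assms(4) show False ..
  qed
  ultimately show ?thesis
    using R dist_eq by linarith
qed

lemma c_extremal_if_exposed:
  fixes K :: "'a::real_normed_vector set"
  assumes "p \<in> K" "dist c p = 1" "\<And>w. w \<in> K \<Longrightarrow> w \<noteq> p \<Longrightarrow> dist c w < 1"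
  shows "c_extremal K p"
proof -
  have "y = p \<or> z = p" if "y \<in> K" "z \<in> K" "p \<in> chull {y, z}" for y z
  proof (rule ccontr)
    assume "\<not> (y = p \<or> z = p)"
    then have "dist c y < 1" "dist c z < 1"
      using assms(3) that by auto
    define e where "e = min (1 - dist c y) (1 - dist c z)"
    define c' where "c' = c + e *\<^sub>R (c - p)"
    have "e > 0"
      using \<open>dist c y < 1\<close> \<open>dist c z < 1\<close> by (simp add: e_def)
    have "dist c' c = e"
      using \<open>e > 0\<close> assms(2) by (simp add: c'_def dist_norm)
    then have "dist c' y \<le> 1" "dist c' z \<le> 1"
      using dist_triangle[of c' y c] dist_triangle[of c' z c] by (simp_all add: e_def)
    then have "c' \<in> cdual {y, z}"
      by (simp add: mem_cdual dist_commute)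
    then have "dist c' p \<le> 1"
      using that(3) by (simp add: chull_def mem_cdual)
    moreover have "dist c' p = 1 + e"
    proof -
      have "c' - p = (1 + e) *\<^sub>R (c - p)"
        by (simp add: c'_def algebra_simps)
      then show ?thesis
        using \<open>e > 0\<close> assms(2) by (simp add: dist_norm)
    qed
    ultimately show False
      using \<open>e > 0\<close> by simp
  qed
  then show ?thesis
    using assms(1) by (auto simp: c_extremal_def)
qed

lemma c_extremal_farthest_point:
  fixes K :: "'a::real_inner set"
  assumes "p \<in> K" and far: "\<And>w. w \<in> K \<Longrightarrow> dist q w \<le> dist q p" and "dist q p < 1"
  shows "c_extremal K p"
proof (cases "p = q")
  case True
  then have "K = {p}"
    using assms(1) far[unfolded True, simplified] by blast
  then show ?thesis
    by (auto simp: c_extremal_def)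
next
  case False
  define R where "R = dist q p"
  define u where "u = sgn (p - q)"
  have u: "norm u = 1" and p_eq: "p = q + R *\<^sub>R u"
    using False by (simp_all add: R_def u_def norm_sgn sgn_div_norm dist_norm norm_minus_commute)
  show ?thesis
  proof (rule c_extremal_if_exposed[where c = "p - u"])
    show "dist (p - u) p = 1"
      using u by (simp add: dist_norm)
    show "dist (p - u) w < 1" if "w \<in> K" "w \<noteq> p" for w
    proof -
      have "R < 1" "dist q w \<le> R"
        using \<open>dist q p < 1\<close> far[OF \<open>w \<in> K\<close>] by (simp_all add: R_def)
      then have "dist (q + R *\<^sub>R u - u) w < 1"
        using dist_lt_one_in_tangent_ball u \<open>w \<noteq> p\<close> p_eq by blast
      then show ?thesis
        using p_eq by simp
    qed
  qed (fact assms(1))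
qed

lemma ex_c_extremal:
  fixes K :: "'a::euclidean_space set"
  assumes "closed K" "K \<noteq> {}" "a \<in> cdual K" "b \<in> cdual K" "a \<noteq> b"
  shows "\<exists>p. c_extremal K p"
proof -
  have "K \<subseteq> cball a 1" "K \<subseteq> cball b 1"
    using assms(3,4) by (auto simp: mem_cdual dist_commute)
  then have "compact K"
    using assms(1) by (metis bounded_cball bounded_subset compact_eq_bounded_closed)
  then obtain p where "p \<in> K" and far: "\<And>w. w \<in> K \<Longrightarrow> dist (midpoint a b) w \<le> dist (midpoint a b) p"
    using distance_attains_sup[of K "midpoint a b"] assms(2) by blast
  moreover have "dist (midpoint a b) p < 1"
    using \<open>p \<in> K\<close> \<open>K \<subseteq> cball a 1\<close> \<open>K \<subseteq> cball b 1\<close> assms(5) by (intro dist_midpoint_lt_one) auto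
  ultimately show ?thesis
    using c_extremal_farthest_point by blast
qed

theorem theorem4p5:
  fixes K :: "(real ^ 'n) set"
  assumes "CARD('n) \<ge> 2"
    and "K \<in> cspindle_class"
    and "K \<noteq> {}"
    and "K \<noteq> UNIV"
  shows "(\<not> (\<exists>x. c_extremal K x)) \<longleftrightarrow> (\<exists>x. K = cball x 1)"
proof
  assume no_extremal: "\<not> (\<exists>x. c_extremal K x)"
  obtain a where a: "a \<in> cdual K"
    using cdual_cspindle_nonempty[OF assms(2,4)] by blast
  have "closed K"
    using cdual_cdual_cspindle[OF assms(2)] closed_cdual by metis
  have "b = a" if "b \<in> cdual K" for b
    using ex_c_extremal[OF \<open>closed K\<close> assms(3) that a] no_extremal by blast
  with a have "cdual K = {a}"
    by blast
  then show "\<exists>x. K = cball x 1"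
    using cdual_cdual_cspindle[OF assms(2)] by (metis cdual_singleton)
next
  assume "\<exists>x. K = cball x 1"
  then obtain x where "K = cball x 1" ..
  moreover have "2 \<le> DIM(real ^ 'n)"
    using assms(1) by simp
  ultimately show "\<not> (\<exists>p. c_extremal K p)"
    using not_c_extremal_cball by blast
qed

end
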